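(* Let $n\ge 2$ and $I=\{0,1,\ldots,n-1\}$. Let $\tilde S_n$ be the affine permutation group with generators $\tilde s_0,\ldots,\tilde s_{n-1}$, and for $i\in I$ let $K_{\{i\}}=\langle\tilde s_j: j\in I,\ j\ne i\rangle$. Then: (1) for every $J\subseteq I$ with $|J|>1$, $(\tilde S_n,(K_{\{i\}})_{i\in J})$ is a subgroup geometry system; (2) for each $i\in I$, $K_{\{i\}}$ is isomorphic to the symmetric group $S_n$ on $\mathbb{Z}/n\mathbb{Z}$, via the map on generators $\tilde s_j\mapsto (j\ \ j+1 \bmod n)$ (the transposition of the residues $j$ and $j+1 \bmod n$); (3) for all $J,L\subseteq I$, $\langle\tilde s_i:i\in J\rangle\cap\langle\tilde s_i:i\in L\rangle=\langle\tilde s_i:i\in J\cap L\rangle$.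
   Context: $\tilde S_n$ is the group (under composition) of all bijections $u:\mathbb{Z}\to\mathbb{Z}$ with $u(j+n)=u(j)+n$ for all $j\in\mathbb{Z}$ and $\sum_{i=1}^n u(i)=\binom{n+1}{2}$; such $u$ is written $[u(1),\ldots,u(n)]$. The generators are $\tilde s_i=[1,\ldots,i-1,i+1,i,i+2,\ldots,n]$ for $1\le i\le n-1$ and $\tilde s_0=[0,2,\ldots,n-1,n+1]$. For a group $G$, a finite index set $J$ and subgroups $(K_{\{i\}})_{i\in J}$, put $K_\tau=\bigcap_{i\in\tau}K_{\{i\}}$ for $\emptyset\ne\tau\subseteq J$ and $K_\emptyset=G$. $(G,(K_{\{i\}})_{i\in J})$ is a subgroup geometry system if: (A1) for all $\tau,\tau'\subseteq J$, $K_{\tau\cap\tau'}=\langle K_\tau,K_{\tau'}\rangle$; (A2) for every $\tau\subsetneq J$ and $i\in J\setminus\tau$, $K_\tau K_{\{i\}}=\bigcap_{j\in\tau}K_{\{j\}}K_{\{i\}}$; (A3) for every $i\in J$, $K_J\ne K_{J\setminus\{i\}}$. *)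

theory Defs
  imports "HOL-Algebra.Generated_Groups" "HOL-Algebra.Bij" "HOL-Combinatorics.Transposition"
begin

definition affine_perm :: "nat \<Rightarrow> (int \<Rightarrow> int) \<Rightarrow> bool" where
  "affine_perm n u \<longleftrightarrow> bij u \<and> (\<forall>j. u (j + int n) = u j + int n)
     \<and> (\<Sum>i\<in>{1..int n}. u i) = int ((n + 1) choose 2)"

definition affS :: "nat \<Rightarrow> (int \<Rightarrow> int) monoid" where
  "affS n = \<lparr>carrier = {u. affine_perm n u}, mult = (\<lambda>u v. u \<circ> v), one = id\<rparr>"

text \<open>The affine permutation with window [w(1),...,w(n)], extended by u(j+n) = u(j)+n.\<close>
definition from_window :: "nat \<Rightarrow> (int \<Rightarrow> int) \<Rightarrow> int \<Rightarrow> int" where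
  "from_window n w j = w ((j - 1) mod int n + 1) + int n * ((j - 1) div int n)"

definition gen_s :: "nat \<Rightarrow> nat \<Rightarrow> int \<Rightarrow> int" where
  "gen_s n i = (if i = 0 then
       from_window n (\<lambda>p. if p = 1 then 0 else if p = int n then int n + 1 else p)
     else
       from_window n (\<lambda>p. if p = int i then int i + 1 else if p = int i + 1 then int i else p))"

definition Kmax :: "nat \<Rightarrow> nat \<Rightarrow> (int \<Rightarrow> int) set" where
  "Kmax n i = generate (affS n) (gen_s n ` ({0..<n} - {i}))"

definition Ktau :: "('a, 'b) monoid_scheme \<Rightarrow> ('i \<Rightarrow> 'a set) \<Rightarrow> 'i set \<Rightarrow> 'a set" where
  "Ktau G K \<tau> = (if \<tau> = {} then carrier G else (\<Inter>i\<in>\<tau>. K i))"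

definition subgroup_geometry_system ::
    "('a, 'b) monoid_scheme \<Rightarrow> 'i set \<Rightarrow> ('i \<Rightarrow> 'a set) \<Rightarrow> bool" where
  "subgroup_geometry_system G J K \<longleftrightarrow>
     group G \<and> finite J \<and> (\<forall>i\<in>J. subgroup (K i) G) \<and>
     (\<forall>\<tau> \<tau>'. \<tau> \<subseteq> J \<longrightarrow> \<tau>' \<subseteq> J \<longrightarrow>
        Ktau G K (\<tau> \<inter> \<tau>') = generate G (Ktau G K \<tau> \<union> Ktau G K \<tau>')) \<and>
     (\<forall>\<tau>. \<tau> \<subset> J \<longrightarrow> (\<forall>i\<in>J - \<tau>.
        Ktau G K \<tau> <#>\<^bsub>G\<^esub> K i =
          (if \<tau> = {} then carrier G else (\<Inter>j\<in>\<tau>. K j <#>\<^bsub>G\<^esub> K i)))) \<and>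
     (\<forall>i\<in>J. Ktau G K J \<noteq> Ktau G K (J - {i}))"

end

theory Submission
  imports Defs
begin

(* An affine permutation is governed by the cuts between c and c + 1 (c an integer): u preserves
   the cut at c if u k <= c <-> k <= c.  The generator s_j preserves every cut at c that is not
   congruent to j mod n.  Conversely, if u <> id preserves the cuts at all c in I - J, then u has a
   descent u (j + 1) < u j with j in J, and u s_j has a smaller value of sum_{x=1..n} (u x - x)^2;
   by induction <s_j : j in J> is exactly the stabiliser of the cuts at I - J.  This gives (3) and
   axiom (A1).  K_{i} maps every translate of the window (i, i + n] onto itself, so reduction
   mod n is injective on it, and every permutation of the residues lifts to it; this gives (2).
   For (A2), each coset g K_{i} contains exactly one element increasing on (i, i + n]; if
   g is in K_j K_{i}, the same descent finds that element inside K_j, so it lies in every K_j. *)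

lemma (in group) generate_Un_generate:
  assumes "S \<subseteq> carrier G" "T \<subseteq> carrier G"
  shows "generate G (generate G S \<union> generate G T) = generate G (S \<union> T)"
proof
  have "generate G S \<union> generate G T \<subseteq> generate G (S \<union> T)"
    using mono_generate[of S "S \<union> T"] mono_generate[of T "S \<union> T"] by auto
  moreover have "subgroup (generate G (S \<union> T)) G"
    using assms by (intro generate_is_subgroup) simp
  ultimately show "generate G (generate G S \<union> generate G T) \<subseteq> generate G (S \<union> T)"
    by (rule generate_subgroup_incl)
  show "generate G (S \<union> T) \<subseteq> generate G (generate G S \<union> generate G T)"
    by (rule mono_generate) (auto intro: generate.incl)
qed

section \<open>Shift-equivariant maps of the integers\<close>

lemma additive_shift_mult:
  fixes g :: "int \<Rightarrow> int"
  assumes "\<And>x. g (x + d) = g x + c"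
  shows "g (x + m * d) = g x + m * c"
proof (induction m rule: int_induct[where k = 0])
  case base
  then show ?case by simp
next
  case (step1 m)
  have "g (x + (m + 1) * d) = g (x + m * d) + c"
    using assms[of "x + m * d"] by (simp add: algebra_simps)
  with step1 show ?case by (simp add: algebra_simps)
next
  case (step2 m)
  have "g (x + m * d) = g (x + (m - 1) * d) + c"
    using assms[of "x + (m - 1) * d"] by (simp add: algebra_simps)
  with step2 show ?case by (simp add: algebra_simps)
qed

lemma periodic_mod:
  fixes f :: "int \<Rightarrow> int"
  assumes "\<And>x. f (x + d) = f x"
  shows "f x = f (x mod d)"
proof -
  have "f (x mod d + x div d * d) = f (x mod d) + x div d * 0"
    by (rule additive_shift_mult) (simp add: assms)
  then show ?thesis by (simp add: mod_div_mult_eq)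
qed

lemma mod_eq_imp_eq_in_window:
  fixes a d x y :: int
  assumes "a < x" "x \<le> a + d" "a < y" "y \<le> a + d" "x mod d = y mod d"
  shows "x = y"
proof -
  have "(x - (a + 1)) mod d = (y - (a + 1)) mod d"
    using assms(5) by (rule mod_diff_cong) simp
  then show ?thesis using assms(1-4) by simp
qed

lemma increasing_self_map_eq_id:
  fixes f :: "int \<Rightarrow> int"
  assumes incr: "\<And>k. lo \<le> k \<Longrightarrow> k < hi \<Longrightarrow> f k < f (k + 1)"
    and maps_to: "\<And>k. lo \<le> k \<Longrightarrow> k \<le> hi \<Longrightarrow> lo \<le> f k \<and> f k \<le> hi"
    and x: "lo \<le> x" "x \<le> hi"
  shows "f x = x"
proof -
  have "x \<le> hi \<longrightarrow> x \<le> f x"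
    using x(1)
  proof (induction x rule: int_ge_induct)
    case base
    show ?case using maps_to[of lo] by simp
  next
    case (step i)
    show ?case
    proof
      assume "i + 1 \<le> hi"
      with step have "i \<le> f i" "f i < f (i + 1)"
        using incr[of i] by auto
      then show "i + 1 \<le> f (i + 1)"
        by simp
    qed
  qed
  moreover have "lo \<le> x \<longrightarrow> f x \<le> x"
    using x(2)
  proof (induction x rule: int_le_induct)
    case base
    show ?case using maps_to[of hi] by simp
  next
    case (step i)
    show ?case
    proof
      assume "lo \<le> i - 1"
      with step have "f i \<le> i" "f (i - 1) < f i"
        using incr[of "i - 1"] by auto
      then show "f (i - 1) \<le> i - 1"
        by simp
    qed
  qed
  ultimately show ?thesis using x by simp
qed

definition shift_equivariant :: "nat \<Rightarrow> (int \<Rightarrow> int) \<Rightarrow> bool" where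
  "shift_equivariant n u \<longleftrightarrow> (\<forall>x. u (x + int n) = u x + int n)"

lemma shift_equivariant_mult:
  assumes "shift_equivariant n u"
  shows "u (x + m * int n) = u x + m * int n"
  using assms unfolding shift_equivariant_def by (intro additive_shift_mult) auto

lemma shift_equivariant_mod:
  assumes "shift_equivariant n u"
  shows "u x = u (x mod int n) + x div int n * int n"
  using shift_equivariant_mult[OF assms, of "x mod int n" "x div int n"]
  by (simp add: mod_div_mult_eq)

lemma shift_equivariant_mod_mod:
  assumes "shift_equivariant n u"
  shows "u x mod int n = u (x mod int n) mod int n"
  using shift_equivariant_mod[OF assms, of x] by simp

lemma shift_equivariant_id: "shift_equivariant n id"
  by (simp add: shift_equivariant_def)

lemma shift_equivariant_comp:
  "shift_equivariant n u \<Longrightarrow> shift_equivariant n v \<Longrightarrow> shift_equivariant n (u \<circ> v)"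
  by (simp add: shift_equivariant_def)

lemma shift_equivariant_inv:
  assumes "bij u" "shift_equivariant n u"
  shows "shift_equivariant n (inv_into UNIV u)"
  unfolding shift_equivariant_def
proof
  fix x
  have "u (inv_into UNIV u x + int n) = x + int n"
    using assms by (simp add: shift_equivariant_def bij_is_surj surj_f_inv_f)
  then have "inv_into UNIV u x + int n = inv_into UNIV u (x + int n)"
    using bij_inv_eq_iff[OF assms(1)] by blast
  then show "inv_into UNIV u (x + int n) = inv_into UNIV u x + int n"
    by simp
qed

lemma bij_shift_equivariant_mod_cancel:
  assumes "bij u" "shift_equivariant n u" "u x mod int n = u y mod int n"
  shows "x mod int n = y mod int n"
proof -
  have "int n dvd u x - u y"
    using assms(3) by (simp add: mod_eq_dvd_iff)
  then obtain m where "u x - u y = int n * m"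
    by (elim dvdE)
  then have "u x = u (y + m * int n)"
    using shift_equivariant_mult[OF assms(2)] by (simp add: algebra_simps)
  then have "x = y + m * int n"
    using assms(1) by (simp add: bij_def inj_eq)
  then show ?thesis by simp
qed

definition preserves_cut :: "int \<Rightarrow> (int \<Rightarrow> int) \<Rightarrow> bool" where
  "preserves_cut c u \<longleftrightarrow> (\<forall>k. u k \<le> c \<longleftrightarrow> k \<le> c)"

lemma preserves_cut_id: "preserves_cut c id"
  by (simp add: preserves_cut_def)

lemma preserves_cut_comp: "preserves_cut c u \<Longrightarrow> preserves_cut c v \<Longrightarrow> preserves_cut c (u \<circ> v)"
  by (simp add: preserves_cut_def)

lemma preserves_cut_inv:
  assumes "bij u" "preserves_cut c u"
  shows "preserves_cut c (inv_into UNIV u)"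
  unfolding preserves_cut_def
proof
  fix k
  have "(u (inv_into UNIV u k) \<le> c) = (inv_into UNIV u k \<le> c)"
    using assms(2) by (simp add: preserves_cut_def)
  then show "(inv_into UNIV u k \<le> c) = (k \<le> c)"
    by (simp add: surj_f_inv_f[OF bij_is_surj[OF assms(1)]])
qed

lemma preserves_cut_shift:
  assumes "shift_equivariant n u" "preserves_cut c u"
  shows "preserves_cut (c + m * int n) u"
  unfolding preserves_cut_def
proof
  fix k
  have "u (k - m * int n) = u k - m * int n"
    using shift_equivariant_mult[OF assms(1), of k "- m"] by simp
  moreover have "(u (k - m * int n) \<le> c) = (k - m * int n \<le> c)"
    using assms(2) by (simp add: preserves_cut_def)
  ultimately show "(u k \<le> c + m * int n) = (k \<le> c + m * int n)"
    by linarith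
qed

lemma preserves_cut_window:
  assumes "shift_equivariant n u" "preserves_cut c u" "c < x" "x \<le> c + int n"
  shows "c < u x \<and> u x \<le> c + int n"
proof -
  have "(u x \<le> c + int n) = (x \<le> c + int n)"
    using preserves_cut_shift[OF assms(1,2), of 1] by (simp add: preserves_cut_def)
  moreover have "(u x \<le> c) = (x \<le> c)"
    using assms(2) by (simp add: preserves_cut_def)
  ultimately show ?thesis using assms(3,4) by linarith
qed

lemma preserves_cut_ascent:
  assumes "shift_equivariant n u" "preserves_cut c u" "k mod int n = c mod int n"
  shows "u k < u (k + 1)"
proof -
  have "int n dvd k - c"
    using assms(3) by (simp add: mod_eq_dvd_iff)
  then obtain m where k: "k = c + m * int n"
    by (metis dvdE add.commute diff_add_cancel mult.commute)
  have "(u k \<le> c + m * int n) = (k \<le> c + m * int n)"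
    and "(u (k + 1) \<le> c + m * int n) = (k + 1 \<le> c + m * int n)"
    using preserves_cut_shift[OF assms(1,2), of m] unfolding preserves_cut_def by blast+
  with k show ?thesis
    by simp
qed

definition increasing_on_window :: "nat \<Rightarrow> int \<Rightarrow> (int \<Rightarrow> int) \<Rightarrow> bool" where
  "increasing_on_window n a u \<longleftrightarrow> (\<forall>k. a < k \<and> k < a + int n \<longrightarrow> u k < u (k + 1))"

lemma increasing_on_window_mono:
  assumes "increasing_on_window n a c" "a < x" "x \<le> y" "y \<le> a + int n"
  shows "c x \<le> c y"
proof -
  have "x + int t \<le> a + int n \<longrightarrow> c x \<le> c (x + int t)" for t
  proof (induction t)
    case (Suc t)
    show ?case
    proof
      assume le: "x + int (Suc t) \<le> a + int n"
      then have "c x \<le> c (x + int t)"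
        using Suc by simp
      moreover have "c (x + int t) < c (x + int t + 1)"
        using assms(1,2) le by (simp add: increasing_on_window_def)
      moreover have "x + int (Suc t) = x + int t + 1"
        by simp
      ultimately show "c x \<le> c (x + int (Suc t))"
        by (metis le_less_trans less_imp_le)
    qed
  qed simp
  from this[of "nat (y - x)"] show ?thesis using assms(3,4) by simp
qed

section \<open>The group of affine permutations\<close>

definition displacement :: "nat \<Rightarrow> (int \<Rightarrow> int) \<Rightarrow> int" where
  "displacement n u = (\<Sum>x\<in>{1..int n}. u x - x)"

lemma sum_Icc_one_int: "(\<Sum>x\<in>{1..int n}. x) = int ((n + 1) choose 2)"
proof (induction n)
  case (Suc n)
  have "{1..int (Suc n)} = insert (int n + 1) {1..int n}" by auto
  moreover have "(Suc n + 1) choose 2 = ((n + 1) choose 2) + (n + 1)"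
    by (simp add: numeral_2_eq_2)
  ultimately show ?case using Suc by simp
qed simp

lemma carrier_affS_iff:
  "u \<in> carrier (affS n) \<longleftrightarrow> bij u \<and> shift_equivariant n u \<and> displacement n u = 0"
proof -
  have "displacement n u = (\<Sum>x\<in>{1..int n}. u x) - (\<Sum>x\<in>{1..int n}. x)"
    by (simp add: displacement_def sum_subtractf)
  then show ?thesis
    unfolding affS_def affine_perm_def shift_equivariant_def using sum_Icc_one_int[of n] by auto
qed

lemma mult_affS [simp]: "mult (affS n) = (\<circ>)"
  by (simp add: affS_def)

lemma one_affS [simp]: "one (affS n) = id"
  by (simp add: affS_def)

definition sq_displacement :: "nat \<Rightarrow> (int \<Rightarrow> int) \<Rightarrow> int" where
  "sq_displacement n u = (\<Sum>x\<in>{1..int n}. (u x - x)\<^sup>2)"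

lemma sq_displacement_nonneg: "0 \<le> sq_displacement n u"
  by (simp add: sq_displacement_def sum_nonneg)

locale affine_period =
  fixes n :: nat
  assumes n_pos: "0 < n"
begin

lemma nat_mod_less: "nat (k mod int n) < n"
  using n_pos by (simp add: nat_less_iff)

lemma int_nat_mod: "int (nat (k mod int n)) = k mod int n"
  using n_pos by simp

lemma bij_betw_mod_window:
  assumes "bij v" "shift_equivariant n v"
  shows "bij_betw (\<lambda>k. v k mod int n) {a<..a + int n} {0..<int n}"
proof -
  let ?W = "{a<..a + int n}" and ?r = "\<lambda>k. v k mod int n"
  have inj: "inj_on ?r ?W"
  proof (rule inj_onI)
    fix x y assume xy: "x \<in> ?W" "y \<in> ?W" "?r x = ?r y"
    have "x mod int n = y mod int n"
      by (rule bij_shift_equivariant_mod_cancel[OF assms xy(3)])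
    with xy(1,2) show "x = y"
      using mod_eq_imp_eq_in_window[of a x "int n" y] by simp
  qed
  moreover have "?r ` ?W \<subseteq> {0..<int n}"
    using n_pos by auto
  moreover have "card (?r ` ?W) = card {0..<int n}"
    using card_image[OF inj] by simp
  ultimately show ?thesis
    by (simp add: bij_betw_def card_subset_eq)
qed

lemma sum_window_comp:
  fixes f :: "int \<Rightarrow> int"
  assumes "bij v" "shift_equivariant n v" "\<And>x. f (x + int n) = f x"
  shows "(\<Sum>x\<in>{a<..a + int n}. f (v x)) = (\<Sum>x\<in>{1..int n}. f x)"
proof -
  have reindex: "(\<Sum>x\<in>{b<..b + int n}. f (w x)) = (\<Sum>x\<in>{0..<int n}. f x)"
    if "bij w" "shift_equivariant n w" for w b
  proof -
    have "(\<Sum>x\<in>{b<..b + int n}. f (w x)) = (\<Sum>x\<in>{b<..b + int n}. f (w x mod int n))"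
      by (rule sum.cong[OF refl], rule periodic_mod, rule assms(3))
    also have "\<dots> = (\<Sum>x\<in>{0..<int n}. f x)"
      by (rule sum.reindex_bij_betw[OF bij_betw_mod_window[OF that]])
    finally show ?thesis .
  qed
  have "{1..int n} = {0<..0 + int n}"
    by auto
  then show ?thesis
    using reindex[OF assms(1,2), of a] reindex[OF bij_id shift_equivariant_id, of 0] by simp
qed

lemma sum_window:
  fixes f :: "int \<Rightarrow> int"
  assumes "\<And>x. f (x + int n) = f x"
  shows "(\<Sum>x\<in>{a<..a + int n}. f x) = (\<Sum>x\<in>{1..int n}. f x)"
  using sum_window_comp[OF bij_id shift_equivariant_id, of f a] assms by simp

lemma sum_comp_shift_equivariant:
  fixes f :: "int \<Rightarrow> int"
  assumes "bij v" "shift_equivariant n v" "\<And>x. f (x + int n) = f x"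
  shows "(\<Sum>x\<in>{1..int n}. f (v x)) = (\<Sum>x\<in>{1..int n}. f x)"
proof -
  have "{1..int n} = {0<..0 + int n}"
    by auto
  then show ?thesis
    using sum_window_comp[of v f 0] assms by simp
qed

lemma displacement_window:
  assumes "shift_equivariant n u"
  shows "displacement n u = (\<Sum>x\<in>{a<..a + int n}. u x - x)"
  unfolding displacement_def using assms
  by (intro sum_window[symmetric]) (simp add: shift_equivariant_def)

lemma sq_displacement_window:
  assumes "shift_equivariant n u"
  shows "sq_displacement n u = (\<Sum>x\<in>{a<..a + int n}. (u x - x)\<^sup>2)"
  unfolding sq_displacement_def using assms
  by (intro sum_window[symmetric]) (simp add: shift_equivariant_def)

lemma affS_comp_closed:
  assumes "u \<in> carrier (affS n)" "v \<in> carrier (affS n)"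
  shows "u \<circ> v \<in> carrier (affS n)"
proof -
  have u: "bij u" "shift_equivariant n u" "displacement n u = 0"
    and v: "bij v" "shift_equivariant n v" "displacement n v = 0"
    using assms carrier_affS_iff by auto
  have per: "u (x + int n) - (x + int n) = u x - x" for x
    using u(2) by (simp add: shift_equivariant_def)
  have "displacement n (u \<circ> v) = (\<Sum>x\<in>{1..int n}. u (v x) - v x) + displacement n v"
    by (simp add: displacement_def sum.distrib[symmetric])
  also have "(\<Sum>x\<in>{1..int n}. u (v x) - v x) = displacement n u"
    using sum_comp_shift_equivariant[OF v(1,2), of "\<lambda>x. u x - x"] per by (simp add: displacement_def)
  also have "displacement n u + displacement n v = 0"
    using u v by simp
  finally have "displacement n (u \<circ> v) = 0" .
  then show ?thesis
    unfolding carrier_affS_iff using bij_comp[OF v(1) u(1)] shift_equivariant_comp[OF u(2) v(2)] by blast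
qed

lemma affS_inv_closed:
  assumes "u \<in> carrier (affS n)"
  shows "inv_into UNIV u \<in> carrier (affS n)"
proof -
  let ?v = "inv_into UNIV u"
  have u: "bij u" "shift_equivariant n u" "displacement n u = 0"
    using assms carrier_affS_iff by auto
  have v: "bij ?v" "shift_equivariant n ?v"
    using u by (simp_all add: bij_imp_bij_inv shift_equivariant_inv)
  have per: "(x + int n) - u (x + int n) = x - u x" for x
    using u(2) by (simp add: shift_equivariant_def)
  have "displacement n ?v = (\<Sum>x\<in>{1..int n}. ?v x - u (?v x))"
    unfolding displacement_def by (simp add: surj_f_inv_f[OF bij_is_surj[OF u(1)]])
  also have "\<dots> = (\<Sum>x\<in>{1..int n}. x - u x)"
    using sum_comp_shift_equivariant[OF v, of "\<lambda>x. x - u x"] per by simp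
  also have "\<dots> = - displacement n u"
    by (simp add: displacement_def sum_negf[symmetric])
  finally have "displacement n ?v = 0"
    using u(3) by simp
  with v show ?thesis
    unfolding carrier_affS_iff by blast
qed

lemma id_in_affS: "id \<in> carrier (affS n)"
  by (simp add: carrier_affS_iff shift_equivariant_id displacement_def)

lemma group_affS: "group (affS n)"
proof (rule groupI)
  fix x
  assume "x \<in> carrier (affS n)"
  then show "\<exists>y\<in>carrier (affS n). y \<otimes>\<^bsub>affS n\<^esub> x = \<one>\<^bsub>affS n\<^esub>"
    using affS_inv_closed carrier_affS_iff
    by (auto intro!: bexI[of _ "inv_into UNIV x"] simp: bij_is_inj inv_o_cancel)
qed (auto simp: affS_comp_closed id_in_affS o_assoc)

lemma inv_affS:
  assumes "u \<in> carrier (affS n)"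
  shows "inv\<^bsub>affS n\<^esub> u = inv_into UNIV u"
proof (rule group.inv_equality[OF group_affS])
  show "inv_into UNIV u \<otimes>\<^bsub>affS n\<^esub> u = \<one>\<^bsub>affS n\<^esub>"
    using assms carrier_affS_iff by (simp add: bij_is_inj inv_o_cancel)
qed (use assms affS_inv_closed in auto)

lemma affS_memI:
  assumes "bij u" "shift_equivariant n u"
    and "\<And>x. a < x \<Longrightarrow> x \<le> a + int n \<Longrightarrow> a < u x \<and> u x \<le> a + int n"
  shows "u \<in> carrier (affS n)"
proof -
  let ?W = "{a<..a + int n}"
  have inj: "inj_on u ?W"
    using assms(1) bij_is_inj inj_on_subset by blast
  moreover have "u ` ?W \<subseteq> ?W"
    using assms(3) by auto
  ultimately have "u ` ?W = ?W"
    by (simp add: card_image card_subset_eq)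
  then have "(\<Sum>x\<in>?W. u x) = (\<Sum>x\<in>?W. x)"
    using sum.reindex[OF inj, of id] by simp
  then have "displacement n u = 0"
    by (simp add: displacement_window[OF assms(2), of a] sum_subtractf)
  with assms(1,2) show ?thesis
    by (simp add: carrier_affS_iff)
qed

lemma shift_equivariant_eqI:
  assumes "shift_equivariant n u" "shift_equivariant n v"
    and "\<And>x. a < x \<Longrightarrow> x \<le> a + int n \<Longrightarrow> u x = v x"
  shows "u = v"
proof
  fix x
  define q where "q = (x - a - 1) div int n"
  define x0 where "x0 = x - q * int n"
  have "x - a - 1 = q * int n + (x - a - 1) mod int n"
    by (simp add: q_def)
  then have "a < x0" "x0 \<le> a + int n"
    using n_pos pos_mod_sign[of "int n" "x - a - 1"] pos_mod_bound[of "int n" "x - a - 1"]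
    unfolding x0_def by linarith+
  moreover have "x = x0 + q * int n"
    by (simp add: x0_def)
  ultimately show "u x = v x"
    using shift_equivariant_mult[OF assms(1), of x0 q] shift_equivariant_mult[OF assms(2), of x0 q]
      assms(3) by simp
qed

lemma increasing_shift_equivariant_eq_translation:
  assumes "shift_equivariant n u" "\<And>k. u k < u (k + 1)"
  shows "u k = u 0 + k"
proof -
  have grow: "u k + int m \<le> u (k + int m)" for k m
  proof (induction m)
    case (Suc m)
    then show ?case using assms(2)[of "k + int m"] by (simp add: algebra_simps)
  qed simp
  have step: "u (k + 1) = u k + 1" for k
  proof (rule ccontr)
    assume "u (k + 1) \<noteq> u k + 1"
    then have "u k + 2 \<le> u (k + 1)"
      using assms(2)[of k] by simp
    moreover have "u (k + 1) + int (n - 1) \<le> u (k + 1 + int (n - 1))"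
      by (rule grow)
    moreover have "k + 1 + int (n - 1) = k + int n"
      using n_pos by simp
    moreover have "u (k + int n) = u k + int n"
      using assms(1) by (simp add: shift_equivariant_def)
    ultimately show False by simp
  qed
  show ?thesis
  proof (induction k rule: int_induct[where k = 0])
    case (step2 i)
    then show ?case using step[of "i - 1"] by simp
  qed (simp_all add: step)
qed

lemma exists_descent:
  assumes "u \<in> carrier (affS n)" "u \<noteq> id"
  shows "\<exists>i<n. u (int i + 1) < u (int i)"
proof (rule ccontr)
  assume no_descent: "\<not> ?thesis"
  have u: "bij u" "shift_equivariant n u" "displacement n u = 0"
    using assms(1) carrier_affS_iff by auto
  have "u k < u (k + 1)" for k
  proof -
    let ?r = "k mod int n" and ?q = "k div int n"
    define i where "i = nat ?r"
    have "i < n" and i: "int i = ?r"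
      unfolding i_def by (rule nat_mod_less, rule int_nat_mod)
    then have "\<not> u (int i + 1) < u (int i)"
      using no_descent by blast
    then have "\<not> u (?r + 1) < u ?r"
      unfolding i .
    moreover have "u ?r \<noteq> u (?r + 1)"
      using u(1) by (simp add: bij_def inj_eq)
    moreover have "u k = u ?r + ?q * int n"
      by (rule shift_equivariant_mod[OF u(2)])
    moreover have "u (k + 1) = u (?r + 1) + ?q * int n"
      using shift_equivariant_mult[OF u(2), of "?r + 1" ?q] mod_div_mult_eq[of k "int n"]
      by (simp add: algebra_simps)
    ultimately show ?thesis by simp
  qed
  then have "u k = u 0 + k" for k
    by (rule increasing_shift_equivariant_eq_translation[OF u(2)])
  then have translation: "u k - k = u 0" for k
    by (metis add_diff_cancel_right')
  then have "displacement n u = int n * u 0"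
    by (simp add: displacement_def)
  with u(3) n_pos have "u 0 = 0"
    by simp
  with translation have "u = id"
    by (simp add: fun_eq_iff)
  with assms(2) show False ..
qed

lemma exists_window_descent:
  assumes "u \<in> carrier (affS n)" "\<not> increasing_on_window n a u"
  obtains k where "a < k" "k < a + int n" "u (k + 1) < u k"
proof -
  obtain k where k: "a < k" "k < a + int n" "\<not> u k < u (k + 1)"
    using assms(2) unfolding increasing_on_window_def by auto
  moreover have "u k \<noteq> u (k + 1)"
    using assms(1) by (simp add: carrier_affS_iff bij_def inj_eq)
  ultimately show ?thesis
    using that by simp
qed

lemma residue_ne_in_open_window:
  assumes "a < k" "k < a + int n"
  shows "k mod int n \<noteq> a mod int n"
proof
  assume "k mod int n = a mod int n"
  then have "k mod int n = (a + int n) mod int n"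
    by simp
  then show False
    using mod_eq_imp_eq_in_window[of a k "int n" "a + int n"] assms n_pos by simp
qed

lemma descent_not_at_preserved_cut:
  assumes "shift_equivariant n u" "preserves_cut (int c) u" "c < n" "u (k + 1) < u k"
  shows "nat (k mod int n) \<noteq> c"
proof
  assume "nat (k mod int n) = c"
  then have "k mod int n = int c mod int n"
    using assms(3) int_nat_mod[of k] by simp
  then have "u k < u (k + 1)"
    by (rule preserves_cut_ascent[OF assms(1,2)])
  with assms(4) show False
    by simp
qed

lemma increasing_representative_unique:
  assumes "b \<in> carrier (affS n)" "preserves_cut a b"
    and "increasing_on_window n a c" "increasing_on_window n a (c \<circ> b)"
  shows "b = id"
proof -
  have b: "bij b" "shift_equivariant n b"
    using assms(1) carrier_affS_iff by auto
  have maps_to: "a < b x \<and> b x \<le> a + int n" if "a < x" "x \<le> a + int n" for x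
    by (rule preserves_cut_window[OF b(2) assms(2) that])
  have b_incr: "b k < b (k + 1)" if "a < k" "k < a + int n" for k
  proof (rule ccontr)
    assume "\<not> b k < b (k + 1)"
    moreover have "b k \<noteq> b (k + 1)"
      using b(1) by (simp add: bij_def inj_eq)
    ultimately have "c (b (k + 1)) \<le> c (b k)"
      using increasing_on_window_mono[OF assms(3)] maps_to that by simp
    moreover have "c (b k) < c (b (k + 1))"
      using assms(4) that by (simp add: increasing_on_window_def)
    ultimately show False by simp
  qed
  have fixed: "b x = x" if "a < x" "x \<le> a + int n" for x
  proof (rule increasing_self_map_eq_id[of "a + 1" "a + int n" b])
    fix k
    assume "a + 1 \<le> k" "k < a + int n"
    then show "b k < b (k + 1)"
      by (intro b_incr) simp_all
  next
    fix k
    assume "a + 1 \<le> k" "k \<le> a + int n"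
    then have "a < b k \<and> b k \<le> a + int n"
      by (intro maps_to) simp_all
    then show "a + 1 \<le> b k \<and> b k \<le> a + int n"
      by simp
  qed (use that in simp_all)
  show ?thesis
    by (rule shift_equivariant_eqI[OF b(2) shift_equivariant_id, of a]) (simp add: fixed)
qed

end

definition cut_stabilizer :: "nat \<Rightarrow> nat set \<Rightarrow> (int \<Rightarrow> int) set" where
  "cut_stabilizer n J = {u \<in> carrier (affS n). \<forall>c\<in>{0..<n} - J. preserves_cut (int c) u}"

lemma cut_stabilizer_Int: "cut_stabilizer n J \<inter> cut_stabilizer n L = cut_stabilizer n (J \<inter> L)"
  by (auto simp: cut_stabilizer_def)

context affine_period
begin

lemma subgroup_cut_stabilizer: "subgroup (cut_stabilizer n J) (affS n)"
proof
  fix u v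
  assume "u \<in> cut_stabilizer n J" "v \<in> cut_stabilizer n J"
  then show "u \<otimes>\<^bsub>affS n\<^esub> v \<in> cut_stabilizer n J"
    by (auto simp: cut_stabilizer_def affS_comp_closed preserves_cut_comp)
next
  fix u
  assume u: "u \<in> cut_stabilizer n J"
  then have "bij u" "u \<in> carrier (affS n)"
    by (auto simp: cut_stabilizer_def carrier_affS_iff)
  with u show "inv\<^bsub>affS n\<^esub> u \<in> cut_stabilizer n J"
    by (auto simp: cut_stabilizer_def inv_affS affS_inv_closed preserves_cut_inv)
qed (auto simp: cut_stabilizer_def id_in_affS preserves_cut_id)

end

section \<open>Reduction modulo n\<close>

definition residue_perm :: "nat \<Rightarrow> (int \<Rightarrow> int) \<Rightarrow> nat \<Rightarrow> nat" where
  "residue_perm n u = (\<lambda>r\<in>{0..<n}. nat (u (int r) mod int n))"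

(* On each translate (a + q n, a + (q + 1) n] of the window (a, a + n], this permutes the points
   according to the permutation \<sigma> of their residues. *)
definition window_lift :: "nat \<Rightarrow> int \<Rightarrow> (nat \<Rightarrow> nat) \<Rightarrow> int \<Rightarrow> int" where
  "window_lift n a \<sigma> k =
     a + 1 + (k - a - 1) div int n * int n + (int (\<sigma> (nat (k mod int n))) - a - 1) mod int n"

context affine_period
begin

lemma residue_perm_Bij:
  assumes "u \<in> carrier (affS n)"
  shows "residue_perm n u \<in> Bij {0..<n}"
proof -
  have u: "bij u" "shift_equivariant n u"
    using assms carrier_affS_iff by auto
  let ?h = "\<lambda>r. nat (u (int r) mod int n)"
  have inj: "inj_on ?h {0..<n}"
  proof (rule inj_onI)
    fix r s
    assume rs: "r \<in> {0..<n}" "s \<in> {0..<n}" "?h r = ?h s"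
    then have "int (?h r) = int (?h s)"
      by simp
    then have "u (int r) mod int n = u (int s) mod int n"
      unfolding int_nat_mod .
    then have "int r mod int n = int s mod int n"
      by (rule bij_shift_equivariant_mod_cancel[OF u])
    with rs(1,2) show "r = s"
      by simp
  qed
  moreover have "?h ` {0..<n} \<subseteq> {0..<n}"
    using nat_mod_less by auto
  ultimately have "bij_betw ?h {0..<n} {0..<n}"
    by (simp add: bij_betw_def card_image card_subset_eq)
  then show ?thesis
    by (simp add: Bij_def residue_perm_def)
qed

lemma residue_perm_comp:
  assumes "shift_equivariant n u"
  shows "residue_perm n (u \<circ> v) = compose {0..<n} (residue_perm n u) (residue_perm n v)"
proof
  fix r
  show "residue_perm n (u \<circ> v) r = compose {0..<n} (residue_perm n u) (residue_perm n v) r"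
  proof (cases "r < n")
    case True
    have "u (v (int r)) mod int n = u (int (nat (v (int r) mod int n))) mod int n"
      using shift_equivariant_mod_mod[OF assms, of "v (int r)"] int_nat_mod[of "v (int r)"] by simp
    with True show ?thesis
      using nat_mod_less[of "v (int r)"] by (simp add: residue_perm_def compose_def)
  qed (simp add: residue_perm_def compose_def)
qed

lemma inj_on_residue_perm:
  "inj_on (residue_perm n) {u \<in> carrier (affS n). preserves_cut a u}"
proof (rule inj_onI)
  fix u v
  assume "u \<in> {u \<in> carrier (affS n). preserves_cut a u}" "v \<in> {u \<in> carrier (affS n). preserves_cut a u}"
  then have u: "shift_equivariant n u" "preserves_cut a u"
    and v: "shift_equivariant n v" "preserves_cut a v"
    using carrier_affS_iff by auto
  assume same: "residue_perm n u = residue_perm n v"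
  have "u x mod int n = v x mod int n" for x
  proof -
    have "residue_perm n u (nat (x mod int n)) = residue_perm n v (nat (x mod int n))"
      using same by simp
    then have "int (nat (u (x mod int n) mod int n)) = int (nat (v (x mod int n) mod int n))"
      using nat_mod_less[of x] by (simp add: residue_perm_def int_nat_mod)
    then show ?thesis
      unfolding int_nat_mod shift_equivariant_mod_mod[OF u(1), of x]
        shift_equivariant_mod_mod[OF v(1), of x] .
  qed
  then show "u = v"
  proof (intro shift_equivariant_eqI[OF u(1) v(1)])
    fix x
    assume "a < x" "x \<le> a + int n"
    with \<open>u x mod int n = v x mod int n\<close> show "u x = v x"
      using preserves_cut_window[OF u] preserves_cut_window[OF v]
      by (intro mod_eq_imp_eq_in_window[of a "u x" "int n" "v x"]) auto
  qed
qed

lemma window_lift_div_mod: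
  assumes "\<sigma> (nat (k mod int n)) < n"
  shows "(window_lift n a \<sigma> k - a - 1) div int n = (k - a - 1) div int n"
    and "window_lift n a \<sigma> k mod int n = int (\<sigma> (nat (k mod int n)))"
proof -
  let ?s = "int (\<sigma> (nat (k mod int n)))" and ?q = "(k - a - 1) div int n"
  let ?e = "(?s - a - 1) mod int n"
  have e: "0 \<le> ?e" "?e < int n"
    using n_pos by simp_all
  have lift: "window_lift n a \<sigma> k = (a + 1 + ?e) + ?q * int n"
    by (simp add: window_lift_def)
  show "(window_lift n a \<sigma> k - a - 1) div int n = ?q"
    unfolding lift using e by simp
  have "window_lift n a \<sigma> k mod int n = (a + 1 + ?e) mod int n"
    unfolding lift by (rule mod_mult_self1)
  also have "\<dots> = (a + 1 + (?s - a - 1)) mod int n"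
    by (rule mod_add_right_eq)
  also have "\<dots> = ?s"
    using assms by simp
  finally show "window_lift n a \<sigma> k mod int n = ?s" .
qed

lemma window_lift_inverse:
  assumes "\<And>r. r < n \<Longrightarrow> \<sigma> r < n" "\<And>r. r < n \<Longrightarrow> \<tau> (\<sigma> r) = r"
  shows "window_lift n a \<tau> (window_lift n a \<sigma> k) = k"
proof -
  let ?r = "nat (k mod int n)"
  have \<sigma>r: "\<sigma> ?r < n"
    using assms(1) nat_mod_less by blast
  have "\<tau> (nat (window_lift n a \<sigma> k mod int n)) = ?r"
    using window_lift_div_mod(2)[of \<sigma> k a, OF \<sigma>r] assms(2)[OF nat_mod_less] by simp
  then have "window_lift n a \<tau> (window_lift n a \<sigma> k)
      = a + 1 + (k - a - 1) div int n * int n + (int ?r - a - 1) mod int n"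
    using window_lift_div_mod(1)[of \<sigma> k a, OF \<sigma>r] by (simp add: window_lift_def)
  also have "(int ?r - a - 1) mod int n = (k - a - 1) mod int n"
    unfolding int_nat_mod using mod_diff_left_eq[of k "int n" "a + 1"] by (simp add: diff_diff_eq)
  finally show ?thesis
    using div_mult_mod_eq[of "k - a - 1" "int n"] by linarith
qed

lemma shift_equivariant_window_lift: "shift_equivariant n (window_lift n a \<sigma>)"
  unfolding shift_equivariant_def
proof
  fix x
  have "(x + int n - a - 1) div int n = (x - a - 1) div int n + 1"
    using div_add_self2[of "int n" "x - a - 1"] n_pos by (simp add: algebra_simps)
  then show "window_lift n a \<sigma> (x + int n) = window_lift n a \<sigma> x + int n"
    by (simp add: window_lift_def algebra_simps)
qed

lemma preserves_cut_window_lift: "preserves_cut a (window_lift n a \<sigma>)"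
  unfolding preserves_cut_def
proof
  fix k
  let ?q = "(k - a - 1) div int n"
  let ?e = "(int (\<sigma> (nat (k mod int n))) - a - 1) mod int n" and ?d = "(k - a - 1) mod int n"
  have bounds: "0 \<le> ?e" "?e < int n" "0 \<le> ?d" "?d < int n"
    using n_pos by simp_all
  have lift: "window_lift n a \<sigma> k = a + 1 + ?q * int n + ?e"
    by (simp add: window_lift_def)
  have k: "k = a + 1 + ?q * int n + ?d"
    using div_mult_mod_eq[of "k - a - 1" "int n"] by linarith
  show "(window_lift n a \<sigma> k \<le> a) = (k \<le> a)"
  proof (cases "0 \<le> ?q")
    case True
    then have "0 \<le> ?q * int n"
      by simp
    then show ?thesis using lift k bounds by linarith
  next
    case False
    then have "?q * int n \<le> - 1 * int n"
      by (intro mult_right_mono) simp_all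
    then show ?thesis using lift k bounds by linarith
  qed
qed

lemma window_lift_in_affS:
  assumes "\<sigma> \<in> Bij {0..<n}"
  shows "window_lift n a \<sigma> \<in> carrier (affS n)"
proof -
  have \<sigma>: "bij_betw \<sigma> {0..<n} {0..<n}"
    using assms by (simp add: Bij_def)
  let ?\<tau> = "inv_into {0..<n} \<sigma>"
  have \<tau>: "bij_betw ?\<tau> {0..<n} {0..<n}"
    by (rule bij_betw_inv_into[OF \<sigma>])
  have "window_lift n a ?\<tau> \<circ> window_lift n a \<sigma> = id"
    using window_lift_inverse[of \<sigma> ?\<tau>] bij_betwE[OF \<sigma>] bij_betw_inv_into_left[OF \<sigma>]
    by (auto simp: fun_eq_iff)
  moreover have "window_lift n a \<sigma> \<circ> window_lift n a ?\<tau> = id"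
    using window_lift_inverse[of ?\<tau> \<sigma>] bij_betwE[OF \<tau>] bij_betw_inv_into_right[OF \<sigma>]
    by (auto simp: fun_eq_iff)
  ultimately have "bij (window_lift n a \<sigma>)"
    by (rule o_bij)
  then show ?thesis
    using affS_memI shift_equivariant_window_lift
      preserves_cut_window[OF shift_equivariant_window_lift preserves_cut_window_lift] by blast
qed

lemma residue_perm_window_lift:
  assumes "\<sigma> \<in> Bij {0..<n}"
  shows "residue_perm n (window_lift n a \<sigma>) = \<sigma>"
proof
  fix r
  show "residue_perm n (window_lift n a \<sigma>) r = \<sigma> r"
  proof (cases "r < n")
    case True
    moreover have "\<sigma> r < n"
      using assms True by (auto simp: Bij_def dest: bij_betwE)
    ultimately show ?thesis
      using window_lift_div_mod(2)[of \<sigma> "int r" a] by (simp add: residue_perm_def)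
  next
    case False
    with assms show ?thesis
      by (simp add: residue_perm_def Bij_def extensional_def)
  qed
qed

end

section \<open>Standard parabolic subgroups\<close>

definition swap_residues :: "nat \<Rightarrow> nat \<Rightarrow> int \<Rightarrow> int" where
  "swap_residues n j x = (if x mod int n = int j then x + 1
     else if x mod int n = (int j + 1) mod int n then x - 1 else x)"

lemma shift_equivariant_swap_residues: "shift_equivariant n (swap_residues n j)"
  by (simp add: shift_equivariant_def swap_residues_def)

locale affine_symmetric = affine_period +
  assumes two_le_n: "2 \<le> n"
begin

lemma succ_mod_ne:
  assumes "j < n"
  shows "(int j + 1) mod int n \<noteq> int j"
proof -
  have "(int j + 1) mod int n = (if int j + 1 = int n then 0 else int j + 1)"
    using assms by auto
  then show ?thesis
    using two_le_n by auto
qed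

lemma swap_residues_at:
  assumes "k mod int n = int j"
  shows "swap_residues n j k = k + 1"
  using assms by (simp add: swap_residues_def)

lemma swap_residues_at_succ:
  assumes "j < n" "k mod int n = (int j + 1) mod int n"
  shows "swap_residues n j k = k - 1"
  using assms succ_mod_ne[OF assms(1)] by (simp add: swap_residues_def)

lemma gen_s_eq_swap_residues:
  assumes "j < n"
  shows "gen_s n j = swap_residues n j"
proof
  fix x
  define p where "p = (x - 1) mod int n + 1"
  define q where "q = (x - 1) div int n"
  have "0 \<le> (x - 1) mod int n" "(x - 1) mod int n < int n"
    using n_pos by simp_all
  then have p: "1 \<le> p" "p \<le> int n"
    unfolding p_def by linarith+
  have x: "x = p + int n * q"
    unfolding p_def q_def using div_mult_mod_eq[of "x - 1" "int n"] by (simp add: algebra_simps)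
  have x_mod: "x mod int n = (if p = int n then 0 else p)"
    using x p by auto
  have window: "from_window n w x = w p + int n * q" for w
    unfolding from_window_def p_def q_def by simp
  show "gen_s n j x = swap_residues n j x"
  proof (cases "j = 0")
    case True
    then have "gen_s n j x = (if p = 1 then 0 else if p = int n then int n + 1 else p) + int n * q"
      by (simp add: gen_s_def window)
    with True show ?thesis
      unfolding swap_residues_def x_mod using p two_le_n x by auto
  next
    case False
    then have "gen_s n j x
        = (if p = int j then int j + 1 else if p = int j + 1 then int j else p) + int n * q"
      by (simp add: gen_s_def window)
    moreover have "(int j + 1) mod int n = (if int j + 1 = int n then 0 else int j + 1)"
      using assms by auto
    ultimately show ?thesis
      unfolding swap_residues_def x_mod using False assms p two_le_n x by auto
  qed
qed

lemma swap_residues_involution: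
  assumes "j < n"
  shows "swap_residues n j (swap_residues n j x) = x"
proof (cases "x mod int n = int j")
  case True
  then have "(x + 1) mod int n = (int j + 1) mod int n"
    by (metis mod_add_left_eq)
  with True show ?thesis
    using swap_residues_at swap_residues_at_succ[OF assms] by simp
next
  case not_fst: False
  show ?thesis
  proof (cases "x mod int n = (int j + 1) mod int n")
    case True
    then have "(x - 1) mod int n = int j"
      using assms by (metis add_diff_cancel_right' mod_diff_left_eq mod_less of_nat_less_iff
          of_nat_mod zmod_int)
    with True show ?thesis
      using swap_residues_at swap_residues_at_succ[OF assms] by simp
  next
    case False
    with not_fst show ?thesis
      by (simp add: swap_residues_def)
  qed
qed

lemma bij_swap_residues:
  assumes "j < n"
  shows "bij (swap_residues n j)"
  by (rule o_bij[of "swap_residues n j"]) (auto simp: swap_residues_involution[OF assms])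

lemma swap_residues_in_affS:
  assumes "j < n"
  shows "swap_residues n j \<in> carrier (affS n)"
proof (rule affS_memI[OF bij_swap_residues[OF assms] shift_equivariant_swap_residues])
  fix x
  assume x: "int j - 1 < x" "x \<le> int j - 1 + int n"
  have "x = int j" if "x mod int n = int j"
    using mod_eq_imp_eq_in_window[of "int j - 1" x "int n" "int j"] x that assms by simp
  moreover have "x = int j + 1" if "x mod int n = (int j + 1) mod int n"
    using mod_eq_imp_eq_in_window[of "int j - 1" x "int n" "int j + 1"] x that two_le_n by simp
  ultimately show "int j - 1 < swap_residues n j x \<and> swap_residues n j x \<le> int j - 1 + int n"
    using x two_le_n by (auto simp: swap_residues_def)
qed

lemma preserves_cut_swap_residues:
  assumes "j < n" "c < n" "c \<noteq> j"
  shows "preserves_cut (int c) (swap_residues n j)"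
  unfolding preserves_cut_def
proof
  fix k
  have "k \<noteq> int c" if "k mod int n = int j"
    using that assms by auto
  moreover have "k \<noteq> int c + 1" if "k mod int n = (int j + 1) mod int n"
  proof
    assume "k = int c + 1"
    with that have "(int c + 1 - 1) mod int n = (int j + 1 - 1) mod int n"
      by (metis mod_diff_left_eq)
    with assms show False
      by simp
  qed
  ultimately show "(swap_residues n j k \<le> int c) = (k \<le> int c)"
    by (auto simp: swap_residues_def)
qed

lemma swap_residues_on_window:
  assumes "k - 1 < x" "x \<le> k - 1 + int n"
  shows "swap_residues n (nat (k mod int n)) x = (if x = k then k + 1 else if x = k + 1 then k else x)"
proof -
  have r: "nat (k mod int n) < n" "int (nat (k mod int n)) = k mod int n"
    by (rule nat_mod_less, rule int_nat_mod)
  have "(k + 1) mod int n = (int (nat (k mod int n)) + 1) mod int n"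
    unfolding r(2) by (simp add: mod_add_left_eq)
  moreover have "x mod int n \<noteq> k mod int n" if "x \<noteq> k"
    using mod_eq_imp_eq_in_window[of "k - 1" x "int n" k] assms that n_pos by auto
  moreover have "x mod int n \<noteq> (k + 1) mod int n" if "x \<noteq> k + 1"
    using mod_eq_imp_eq_in_window[of "k - 1" x "int n" "k + 1"] assms that two_le_n by auto
  ultimately show ?thesis
    using swap_residues_at[of k "nat (k mod int n)"] swap_residues_at_succ[OF r(1), of "k + 1"] r(2)
    unfolding swap_residues_def r(2) by (auto simp: mod_add_left_eq)
qed

lemma sq_displacement_swap_less:
  assumes "u \<in> carrier (affS n)" "u (k + 1) < u k"
  shows "sq_displacement n (u \<circ> swap_residues n (nat (k mod int n))) < sq_displacement n u"
proof -
  let ?s = "swap_residues n (nat (k mod int n))"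
  let ?W = "{k - 1<..k - 1 + int n}"
  let ?R = "?W - {k} - {k + 1}"
  let ?f = "\<lambda>x. (u x - x)\<^sup>2" and ?g = "\<lambda>x. (u (?s x) - x)\<^sup>2"
  have u: "shift_equivariant n u"
    using assms(1) carrier_affS_iff by auto
  have split: "sum h ?W = h k + h (k + 1) + sum h ?R" for h :: "int \<Rightarrow> int"
  proof -
    have "sum h ?W = h k + sum h (?W - {k})"
      by (rule sum.remove) (use two_le_n in auto)
    also have "sum h (?W - {k}) = h (k + 1) + sum h ?R"
      by (rule sum.remove) (use two_le_n in auto)
    finally show ?thesis
      by simp
  qed
  have "?s k = k + 1" "?s (k + 1) = k"
    using swap_residues_on_window[of k] two_le_n by simp_all
  with assms(2) have "?g k + ?g (k + 1) < ?f k + ?f (k + 1)"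
    by (simp add: power2_eq_square algebra_simps)
  moreover have "sum ?g ?R = sum ?f ?R"
    using swap_residues_on_window[of k] by simp
  moreover have "sq_displacement n (u \<circ> ?s) = sum ?g ?W"
    using sq_displacement_window[OF shift_equivariant_comp[OF u shift_equivariant_swap_residues]]
    by simp
  moreover have "sq_displacement n u = sum ?f ?W"
    by (rule sq_displacement_window[OF u])
  ultimately show ?thesis
    unfolding split by linarith
qed

lemma gen_s_in_cut_stabilizer:
  assumes "j \<in> J" "j < n"
  shows "gen_s n j \<in> cut_stabilizer n J"
proof -
  have "preserves_cut (int c) (swap_residues n j)" if "c \<in> {0..<n} - J" for c
    using that assms by (intro preserves_cut_swap_residues) auto
  then show ?thesis
    using swap_residues_in_affS[OF assms(2)]
    by (simp add: cut_stabilizer_def gen_s_eq_swap_residues[OF assms(2)])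
qed

lemma not_preserves_cut_gen_s:
  assumes "i < n"
  shows "\<not> preserves_cut (int i) (gen_s n i)"
proof
  assume "preserves_cut (int i) (gen_s n i)"
  then have "(swap_residues n i (int i) \<le> int i) = (int i \<le> int i)"
    unfolding preserves_cut_def gen_s_eq_swap_residues[OF assms] by blast
  then show False
    using swap_residues_at[of "int i" i] assms by simp
qed

lemma cut_stabilizer_subset_generate:
  assumes "u \<in> cut_stabilizer n J"
  shows "u \<in> generate (affS n) (gen_s n ` J)"
  using assms
proof (induction "nat (sq_displacement n u)" arbitrary: u rule: less_induct)
  case less
  then have u: "u \<in> carrier (affS n)"
    by (simp add: cut_stabilizer_def)
  show ?case
  proof (cases "u = id")
    case True
    then show ?thesis
      using generate.one[of "affS n"] by simp
  next
    case False
    then obtain i where i: "i < n" "u (int i + 1) < u (int i)"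
      using exists_descent[OF u] by blast
    have "i \<in> J"
    proof (rule ccontr)
      assume "i \<notin> J"
      with less.prems i(1) have "preserves_cut (int i) u"
        by (simp add: cut_stabilizer_def)
      with u i have "nat (int i mod int n) \<noteq> i"
        by (intro descent_not_at_preserved_cut) (simp_all add: carrier_affS_iff)
      with i(1) show False
        by simp
    qed
    let ?v = "u \<circ> gen_s n i"
    have "?v \<in> cut_stabilizer n J"
      using subgroup.m_closed[OF subgroup_cut_stabilizer less.prems gen_s_in_cut_stabilizer[OF \<open>i \<in> J\<close> i(1)]]
      by simp
    moreover have "sq_displacement n ?v < sq_displacement n u"
      using sq_displacement_swap_less[OF u i(2)] i(1) by (simp add: gen_s_eq_swap_residues)
    ultimately have "?v \<in> generate (affS n) (gen_s n ` J)"
      using less.hyps sq_displacement_nonneg[of n ?v] by (simp add: nat_less_eq_zless)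
    moreover have "gen_s n i \<in> generate (affS n) (gen_s n ` J)"
      using \<open>i \<in> J\<close> by (auto intro: generate.incl)
    moreover have "u = ?v \<otimes>\<^bsub>affS n\<^esub> gen_s n i"
      by (simp add: fun_eq_iff gen_s_eq_swap_residues[OF i(1)] swap_residues_involution[OF i(1)])
    ultimately show ?thesis
      by (metis generate.eng)
  qed
qed

theorem generate_gen_s_eq_cut_stabilizer:
  assumes "J \<subseteq> {0..<n}"
  shows "generate (affS n) (gen_s n ` J) = cut_stabilizer n J"
proof
  show "generate (affS n) (gen_s n ` J) \<subseteq> cut_stabilizer n J"
    by (rule group.generate_subgroup_incl[OF group_affS _ subgroup_cut_stabilizer])
      (use assms gen_s_in_cut_stabilizer in auto)
  show "cut_stabilizer n J \<subseteq> generate (affS n) (gen_s n ` J)"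
    using cut_stabilizer_subset_generate by blast
qed

corollary generate_gen_s_Int:
  assumes "J \<subseteq> {0..<n}" "L \<subseteq> {0..<n}"
  shows "generate (affS n) (gen_s n ` J) \<inter> generate (affS n) (gen_s n ` L)
    = generate (affS n) (gen_s n ` (J \<inter> L))"
proof -
  have "J \<inter> L \<subseteq> {0..<n}"
    using assms by auto
  with assms show ?thesis
    by (simp add: generate_gen_s_eq_cut_stabilizer cut_stabilizer_Int)
qed

lemma Kmax_eq:
  assumes "i < n"
  shows "Kmax n i = {u \<in> carrier (affS n). preserves_cut (int i) u}"
  unfolding Kmax_def using assms
  by (subst generate_gen_s_eq_cut_stabilizer) (auto simp: cut_stabilizer_def)

lemma subgroup_Kmax:
  assumes "i < n"
  shows "subgroup (Kmax n i) (affS n)"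
  unfolding Kmax_def
  by (rule group.generate_is_subgroup[OF group_affS])
    (auto simp: gen_s_eq_swap_residues swap_residues_in_affS)

lemma swap_residues_in_Kmax:
  assumes "r < n" "i < n" "r \<noteq> i"
  shows "swap_residues n r \<in> Kmax n i"
  using assms swap_residues_in_affS preserves_cut_swap_residues by (simp add: Kmax_eq)

lemma Kmax_comp_closed:
  assumes "i < n" "u \<in> Kmax n i" "v \<in> Kmax n i"
  shows "u \<circ> v \<in> Kmax n i"
  using subgroup.m_closed[OF subgroup_Kmax[OF assms(1)] assms(2,3)] by simp

lemma Kmax_inv_closed:
  assumes "i < n" "u \<in> Kmax n i"
  shows "inv_into UNIV u \<in> Kmax n i"
  using subgroup.m_inv_closed[OF subgroup_Kmax[OF assms(1)] assms(2)] assms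
  by (simp add: inv_affS Kmax_eq)

lemma bij_of_Kmax:
  assumes "i < n" "u \<in> Kmax n i"
  shows "bij u"
  using assms by (simp add: Kmax_eq carrier_affS_iff)

lemma swap_residues_residue:
  assumes "j < n" "r < n"
  shows "nat (swap_residues n j (int r) mod int n) = transpose j ((j + 1) mod n) r"
proof -
  have succ: "int ((j + 1) mod n) = (int j + 1) mod int n"
    by (simp add: of_nat_mod add.commute)
  consider "r = j" | "r = (j + 1) mod n" | "r \<noteq> j" "r \<noteq> (j + 1) mod n"
    by blast
  then show ?thesis
  proof cases
    case 1
    then show ?thesis
      using assms succ swap_residues_at[of "int r" j] by (simp add: transpose_def)
  next
    case 2
    then have r: "int r = (int j + 1) mod int n"
      using succ by simp
    then have "(int r - 1) mod int n = int j"
      using assms by (simp add: mod_diff_left_eq)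
    with 2 r assms show ?thesis
      using swap_residues_at_succ[OF assms(1), of "int r"] succ_mod_ne[OF assms(1)]
      by (simp add: transpose_def)
  next
    case 3
    then have "int r \<noteq> (int j + 1) mod int n"
      using succ by (metis of_nat_eq_iff)
    with 3 assms show ?thesis
      by (simp add: swap_residues_def transpose_def)
  qed
qed

lemma residue_perm_gen_s:
  assumes "j < n"
  shows "residue_perm n (gen_s n j) = restrict (transpose j ((j + 1) mod n)) {0..<n}"
  using swap_residues_residue[OF assms]
  by (auto simp: fun_eq_iff residue_perm_def gen_s_eq_swap_residues[OF assms])

theorem residue_perm_iso_Kmax:
  assumes "i < n"
  shows "residue_perm n \<in> iso ((affS n)\<lparr>carrier := Kmax n i\<rparr>) (BijGroup {0..<n})"
proof -
  have K: "Kmax n i = {u \<in> carrier (affS n). preserves_cut (int i) u}"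
    by (rule Kmax_eq[OF assms])
  have "residue_perm n \<in> hom ((affS n)\<lparr>carrier := Kmax n i\<rparr>) (BijGroup {0..<n})"
    unfolding hom_def using K residue_perm_Bij residue_perm_comp carrier_affS_iff
    by (auto simp: BijGroup_def)
  moreover have "residue_perm n ` Kmax n i = Bij {0..<n}"
  proof
    show "residue_perm n ` Kmax n i \<subseteq> Bij {0..<n}"
      using K residue_perm_Bij by auto
    show "Bij {0..<n} \<subseteq> residue_perm n ` Kmax n i"
    proof
      fix \<sigma>
      assume "\<sigma> \<in> Bij {0..<n}"
      then have "window_lift n (int i) \<sigma> \<in> Kmax n i" "residue_perm n (window_lift n (int i) \<sigma>) = \<sigma>"
        using K window_lift_in_affS preserves_cut_window_lift residue_perm_window_lift by auto
      then show "\<sigma> \<in> residue_perm n ` Kmax n i"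
        by (metis image_eqI)
    qed
  qed
  ultimately show ?thesis
    using inj_on_residue_perm[of "int i"] K by (simp add: iso_def bij_betw_def BijGroup_def)
qed

section \<open>Coset representatives and the subgroup geometry system\<close>

lemma exists_increasing_in_Kmax_coset:
  assumes "i < n" "j < n" "i \<noteq> j" "a \<in> Kmax n j"
  shows "\<exists>b\<in>Kmax n i. a \<circ> b \<in> Kmax n j \<and> increasing_on_window n (int i) (a \<circ> b)"
  using assms(4)
proof (induction "nat (sq_displacement n a)" arbitrary: a rule: less_induct)
  case less
  have a: "a \<in> carrier (affS n)" "preserves_cut (int j) a"
    using less.prems Kmax_eq[OF assms(2)] by auto
  show ?case
  proof (cases "increasing_on_window n (int i) a")
    case True
    then show ?thesis
      using less.prems subgroup.one_closed[OF subgroup_Kmax[OF assms(1)]] by (intro bexI[of _ id]) auto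
  next
    case False
    then obtain k where k: "int i < k" "k < int i + int n" and descent: "a (k + 1) < a k"
      using exists_window_descent[OF a(1)] by blast
    define r where "r = nat (k mod int n)"
    have r: "r < n" "int r = k mod int n"
      unfolding r_def by (rule nat_mod_less, rule int_nat_mod)
    have "r \<noteq> i"
      using residue_ne_in_open_window[OF k] r assms(1) by auto
    moreover have "r \<noteq> j"
      unfolding r_def using a assms(2) descent
      by (intro descent_not_at_preserved_cut) (simp_all add: carrier_affS_iff)
    ultimately have s: "swap_residues n r \<in> Kmax n i" "swap_residues n r \<in> Kmax n j"
      using swap_residues_in_Kmax r(1) assms(1,2) by auto
    have "nat (sq_displacement n (a \<circ> swap_residues n r)) < nat (sq_displacement n a)"
      using sq_displacement_swap_less[OF a(1) descent] sq_displacement_nonneg[of n "a \<circ> swap_residues n r"]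
      by (simp add: r_def)
    moreover have "a \<circ> swap_residues n r \<in> Kmax n j"
      by (rule Kmax_comp_closed[OF assms(2) less.prems s(2)])
    ultimately obtain b where b: "b \<in> Kmax n i" "a \<circ> swap_residues n r \<circ> b \<in> Kmax n j"
      "increasing_on_window n (int i) (a \<circ> swap_residues n r \<circ> b)"
      using less.hyps by blast
    show ?thesis
      using b Kmax_comp_closed[OF assms(1) s(1) b(1)]
      by (intro bexI[of _ "swap_residues n r \<circ> b"]) (auto simp: o_assoc)
  qed
qed

lemma Kmax_set_mult_representative:
  assumes "i < n" "j < n" "i \<noteq> j" "g \<in> Kmax n j <#>\<^bsub>affS n\<^esub> Kmax n i"
  shows "\<exists>\<beta>\<in>Kmax n i. g \<circ> \<beta> \<in> Kmax n j \<and> increasing_on_window n (int i) (g \<circ> \<beta>)"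
proof -
  obtain a b where ab: "a \<in> Kmax n j" "b \<in> Kmax n i" "g = a \<circ> b"
    using assms(4) unfolding set_mult_def by auto
  obtain b' where b': "b' \<in> Kmax n i" "a \<circ> b' \<in> Kmax n j" "increasing_on_window n (int i) (a \<circ> b')"
    using exists_increasing_in_Kmax_coset[OF assms(1-3) ab(1)] by blast
  have "g \<circ> (inv_into UNIV b \<circ> b') = a \<circ> b'"
    using ab(3) bij_of_Kmax[OF assms(1) ab(2)]
    by (simp add: fun_eq_iff bij_is_surj surj_f_inv_f)
  moreover have "inv_into UNIV b \<circ> b' \<in> Kmax n i"
    by (rule Kmax_comp_closed[OF assms(1) Kmax_inv_closed[OF assms(1) ab(2)] b'(1)])
  ultimately show ?thesis
    using b' by (intro bexI[of _ "inv_into UNIV b \<circ> b'"]) auto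
qed

lemma increasing_Kmax_representative_unique:
  assumes "i < n" "\<beta> \<in> Kmax n i" "\<beta>' \<in> Kmax n i"
    and "increasing_on_window n (int i) (g \<circ> \<beta>)" "increasing_on_window n (int i) (g \<circ> \<beta>')"
  shows "g \<circ> \<beta> = g \<circ> \<beta>'"
proof -
  let ?b = "inv_into UNIV \<beta> \<circ> \<beta>'"
  have g\<beta>: "g \<circ> \<beta> \<circ> ?b = g \<circ> \<beta>'"
    using bij_of_Kmax[OF assms(1,2)] by (simp add: fun_eq_iff bij_is_surj surj_f_inv_f)
  have "?b \<in> Kmax n i"
    by (rule Kmax_comp_closed[OF assms(1) Kmax_inv_closed[OF assms(1,2)] assms(3)])
  then have "?b = id"
    using increasing_representative_unique[of ?b "int i" "g \<circ> \<beta>"] assms(4,5) g\<beta> Kmax_eq[OF assms(1)]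
    by auto
  with g\<beta> show ?thesis
    by simp
qed

lemma Kmax_Inter_set_mult:
  assumes "\<tau> \<noteq> {}" "\<tau> \<subseteq> {0..<n}" "i < n" "i \<notin> \<tau>"
  shows "(\<Inter>j\<in>\<tau>. Kmax n j) <#>\<^bsub>affS n\<^esub> Kmax n i = (\<Inter>j\<in>\<tau>. Kmax n j <#>\<^bsub>affS n\<^esub> Kmax n i)"
proof
  show "(\<Inter>j\<in>\<tau>. Kmax n j) <#>\<^bsub>affS n\<^esub> Kmax n i \<subseteq> (\<Inter>j\<in>\<tau>. Kmax n j <#>\<^bsub>affS n\<^esub> Kmax n i)"
    unfolding set_mult_def by blast
  show "(\<Inter>j\<in>\<tau>. Kmax n j <#>\<^bsub>affS n\<^esub> Kmax n i) \<subseteq> (\<Inter>j\<in>\<tau>. Kmax n j) <#>\<^bsub>affS n\<^esub> Kmax n i"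
  proof
    fix g
    assume g: "g \<in> (\<Inter>j\<in>\<tau>. Kmax n j <#>\<^bsub>affS n\<^esub> Kmax n i)"
    have representative: "\<exists>\<beta>\<in>Kmax n i. g \<circ> \<beta> \<in> Kmax n j \<and> increasing_on_window n (int i) (g \<circ> \<beta>)"
      if "j \<in> \<tau>" for j
    proof -
      have "j < n" "i \<noteq> j"
        using that assms(2,4) by auto
      moreover have "g \<in> Kmax n j <#>\<^bsub>affS n\<^esub> Kmax n i"
        using g that by blast
      ultimately show ?thesis
        by (rule Kmax_set_mult_representative[OF assms(3)])
    qed
    obtain j0 where "j0 \<in> \<tau>"
      using assms(1) by auto
    then obtain \<beta> where \<beta>: "\<beta> \<in> Kmax n i" "increasing_on_window n (int i) (g \<circ> \<beta>)"
      using representative by blast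
    have "g \<circ> \<beta> \<in> Kmax n j" if "j \<in> \<tau>" for j
      using representative[OF that] increasing_Kmax_representative_unique[OF assms(3) \<beta>(1) _ \<beta>(2)]
      by metis
    moreover have "g = g \<circ> \<beta> \<circ> inv_into UNIV \<beta>"
      using bij_of_Kmax[OF assms(3) \<beta>(1)] by (simp add: fun_eq_iff bij_is_surj surj_f_inv_f)
    moreover have "inv_into UNIV \<beta> \<in> Kmax n i"
      by (rule Kmax_inv_closed[OF assms(3) \<beta>(1)])
    ultimately show "g \<in> (\<Inter>j\<in>\<tau>. Kmax n j) <#>\<^bsub>affS n\<^esub> Kmax n i"
      unfolding set_mult_def by auto
  qed
qed

lemma Ktau_Kmax:
  assumes "\<tau> \<subseteq> {0..<n}"
  shows "Ktau (affS n) (Kmax n) \<tau> = generate (affS n) (gen_s n ` ({0..<n} - \<tau>))"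
proof (cases "\<tau> = {}")
  case True
  then show ?thesis
    by (simp add: Ktau_def cut_stabilizer_def generate_gen_s_eq_cut_stabilizer)
next
  case False
  have "(\<Inter>j\<in>\<tau>. Kmax n j) = (\<Inter>j\<in>\<tau>. {u \<in> carrier (affS n). preserves_cut (int j) u})"
    using assms by (intro INF_cong) (auto simp: Kmax_eq)
  also have "\<dots> = cut_stabilizer n ({0..<n} - \<tau>)"
    using False assms by (auto simp: cut_stabilizer_def)
  finally show ?thesis
    using False by (simp add: Ktau_def generate_gen_s_eq_cut_stabilizer)
qed

lemma Ktau_Int_Kmax:
  assumes "\<tau> \<subseteq> {0..<n}" "\<tau>' \<subseteq> {0..<n}"
  shows "Ktau (affS n) (Kmax n) (\<tau> \<inter> \<tau>')
    = generate (affS n) (Ktau (affS n) (Kmax n) \<tau> \<union> Ktau (affS n) (Kmax n) \<tau>')"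
proof -
  have gens: "gen_s n ` A \<subseteq> carrier (affS n)" if "A \<subseteq> {0..<n}" for A
    using that by (auto simp: gen_s_eq_swap_residues swap_residues_in_affS)
  have "gen_s n ` ({0..<n} - \<tau>) \<union> gen_s n ` ({0..<n} - \<tau>') = gen_s n ` ({0..<n} - \<tau> \<inter> \<tau>')"
    by auto
  moreover have "\<tau> \<inter> \<tau>' \<subseteq> {0..<n}"
    using assms by auto
  ultimately show ?thesis
    using group.generate_Un_generate[OF group_affS gens gens] assms by (simp add: Ktau_Kmax)
qed

lemma Ktau_Kmax_remove_ne:
  assumes "J \<subseteq> {0..<n}" "i \<in> J"
  shows "Ktau (affS n) (Kmax n) J \<noteq> Ktau (affS n) (Kmax n) (J - {i})"
proof -
  have i: "i < n" "J - {i} \<subseteq> {0..<n}"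
    using assms by auto
  have "gen_s n i \<in> Ktau (affS n) (Kmax n) (J - {i})"
    unfolding Ktau_Kmax[OF i(2)] using i(1) by (intro generate.incl) auto
  moreover have "gen_s n i \<notin> Ktau (affS n) (Kmax n) J"
    using Ktau_Kmax[OF assms(1)] generate_gen_s_eq_cut_stabilizer[of "{0..<n} - J"]
      not_preserves_cut_gen_s[OF i(1)] assms by (auto simp: cut_stabilizer_def)
  ultimately show ?thesis
    by blast
qed

theorem subgroup_geometry_system_Kmax:
  assumes "J \<subseteq> {0..<n}"
  shows "subgroup_geometry_system (affS n) J (Kmax n)"
  unfolding subgroup_geometry_system_def
proof (intro conjI allI impI ballI)
  show "group (affS n)"
    by (rule group_affS)
  show "finite J"
    using assms finite_subset by blast
  show "subgroup (Kmax n i) (affS n)" if "i \<in> J" for i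
    using subgroup_Kmax that assms by auto
  show "Ktau (affS n) (Kmax n) (\<tau> \<inter> \<tau>')
      = generate (affS n) (Ktau (affS n) (Kmax n) \<tau> \<union> Ktau (affS n) (Kmax n) \<tau>')"
    if "\<tau> \<subseteq> J" "\<tau>' \<subseteq> J" for \<tau> \<tau>'
    using that assms by (intro Ktau_Int_Kmax) auto
  show "Ktau (affS n) (Kmax n) J \<noteq> Ktau (affS n) (Kmax n) (J - {i})" if "i \<in> J" for i
    using assms that by (rule Ktau_Kmax_remove_ne)
next
  fix \<tau> i
  assume "\<tau> \<subset> J" "i \<in> J - \<tau>"
  with assms have "\<tau> \<subseteq> {0..<n}" "i < n" "i \<notin> \<tau>"
    by auto
  then show "Ktau (affS n) (Kmax n) \<tau> <#>\<^bsub>affS n\<^esub> Kmax n i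
      = (if \<tau> = {} then carrier (affS n) else (\<Inter>j\<in>\<tau>. Kmax n j <#>\<^bsub>affS n\<^esub> Kmax n i))"
    using Kmax_Inter_set_mult group.set_mult_carrier_idem[OF group_affS subgroup_Kmax]
    by (simp add: Ktau_def)
qed

end

theorem mainTheorem4:
  fixes n :: nat
  assumes "n \<ge> 2"
  shows "(\<forall>J. J \<subseteq> {0..<n} \<and> card J > 1 \<longrightarrow>
            subgroup_geometry_system (affS n) J (Kmax n))
       \<and> (\<forall>i<n. \<exists>\<phi>. \<phi> \<in> iso ((affS n)\<lparr>carrier := Kmax n i\<rparr>) (BijGroup {0..<n})
              \<and> (\<forall>j<n. j \<noteq> i \<longrightarrow>
                   \<phi> (gen_s n j) = restrict (transpose j ((j + 1) mod n)) {0..<n}))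
       \<and> (\<forall>J L. J \<subseteq> {0..<n} \<longrightarrow> L \<subseteq> {0..<n} \<longrightarrow>
            generate (affS n) (gen_s n ` J) \<inter> generate (affS n) (gen_s n ` L)
              = generate (affS n) (gen_s n ` (J \<inter> L)))"
proof -
  interpret affine_symmetric n
    using assms by unfold_locales simp_all
  show ?thesis
    using subgroup_geometry_system_Kmax residue_perm_iso_Kmax residue_perm_gen_s generate_gen_s_Int
    by blast
qed

end
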